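(* Let $\mathbf A$ be an interior $r\ell u$-groupoid and $\mathbf B$ a partial subalgebra of $\mathbf A$. Then the map $b\mapsto\{(\mathrm{id},b)\}^{\lhd}$ from $B$ to the universe of $\mathbf F^+_{\mathbf A,\mathbf B}$ is an embedding of the partial algebra $\mathbf B$ into $\mathbf F^+_{\mathbf A,\mathbf B}$. The same holds if $\mathbf A$ is an interior $r\ell uz$-groupoid and $0^{\mathbf A}\in B$, where $\mathbf F_{\mathbf A,\mathbf B}$ is taken as an enriched $ruz$-frame with $\epsilon=(\mathrm{id},0^{\mathbf A})$.
   Context: An $r\ell u$-groupoid is an algebra $(A,\wedge,\vee,\cdot,\backslash,/,1)$ with $(A,\wedge,\vee)$ a lattice (order $\le$), $(A,\cdot,1)$ a unital groupoid (binary operation, not necessarily associative, with two-sided unit $1$), and $x\cdot y\le z\iff y\le x\backslash z\iff x\le z/y$; an $r\ell uz$-groupoid additionally has an arbitrary constant $0$. An interior one has a unary $!$ with $1\le !1$, $!x\cdot!y\le !(x\cdot y)$, $!x\le x$, $!x\le !!x$, $x\le y\Rightarrow !x\le !y$. A partial subalgebra $\mathbf B$ of $\mathbf A$ is a subset $B$ with $f^{\mathbf B}(\vec b)=f^{\mathbf A}(\vec b)$ if this lies in $B$, undefined otherwise. An embedding of a partial algebra $\mathbf B$ into an algebra $\mathbf D$ is an injective map $h$ with $h(f^{\mathbf B}(\vec b))=f^{\mathbf D}(h(\vec b))$ whenever the left side is defined. Enriched $ru$-frame: $(G,T,N,K)$ with $(G,\cdot,\varepsilon)$ a unital groupoid,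 $T$ a set, $N\subseteq G\times T$ nuclear (for all $x,y\in G,z\in T$ there are $x\backslash\!\!\backslash z, z/\!\!/y\in T$ with $x\cdot y\,N\,z\iff y\,N\,x\backslash\!\!\backslash z\iff x\,N\,z/\!\!/y$), $K$ a sub-unital-groupoid of $G$; an enriched $ruz$-frame additionally has $\epsilon\in T$. $X^{\rhd}=\{t\mid\forall x\in X\,xNt\}$, $Y^{\lhd}=\{g\mid\forall y\in Y\,gNy\}$, $\gamma_N(X)=X^{\rhd\lhd}$. $\mathbf F^+$: universe the closed sets ($\gamma_N(X)=X$), $X\wedge Y=X\cap Y$, $X\vee Y=\gamma_N(X\cup Y)$, $X\cdot Y=\gamma_N(X\circ Y)$ with $X\circ Y=\{x\cdot y\}$, $X\backslash Y=\{z\mid X\circ\{z\}\subseteq Y\}$, $Y/X=\{z\mid \{z\}\circ X\subseteq Y\}$, $!X=\gamma_N(X\cap K)$, unit $\gamma_N(\{\varepsilon\})$, and in the $ruz$ case zero $\{\epsilon\}^{\lhd}$. $\mathbf F_{\mathbf A,\mathbf B}=(G_B,T_B,N_B,K_B)$: $G_B$ the sub-unital-groupoid of $(A,\cdot,1)$ generated by $B$; $U_{G_B}$ the unary linear polynomials over $G_B$ (maps given by a groupoid term with one variable occurring exactly once and other leaves in $G_B$, including $\mathrm{id}$); $T_B=U_{G_B}\times B$; $x\,N_B\,(u,b)$ iff $u(x)\le^{\mathbf A}b$; $K_B$ the sub-unital-groupoid generated by $\{!^{\mathbf A}b\mid b\in B,\ !^{\mathbf A}b\in B\}$. *)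

theory Defs
  imports Main
begin

section \<open>Interior r-l-u-groupoids (universe = the whole type)\<close>

record 'a ialg =
  meet :: "'a \<Rightarrow> 'a \<Rightarrow> 'a"
  join :: "'a \<Rightarrow> 'a \<Rightarrow> 'a"
  mult :: "'a \<Rightarrow> 'a \<Rightarrow> 'a"
  ldiv :: "'a \<Rightarrow> 'a \<Rightarrow> 'a"   (* ldiv x z = x \ z *)
  rdiv :: "'a \<Rightarrow> 'a \<Rightarrow> 'a"   (* rdiv z y = z / y *)
  one  :: "'a"
  bang :: "'a \<Rightarrow> 'a"

definition ale :: "'a ialg \<Rightarrow> 'a \<Rightarrow> 'a \<Rightarrow> bool" where
  "ale A x y \<longleftrightarrow> meet A x y = x"

definition interior_rlu_groupoid :: "'a ialg \<Rightarrow> bool" where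
  "interior_rlu_groupoid A \<longleftrightarrow>
     (\<forall>x y. meet A x y = meet A y x) \<and> (\<forall>x y. join A x y = join A y x) \<and>
     (\<forall>x y z. meet A (meet A x y) z = meet A x (meet A y z)) \<and>
     (\<forall>x y z. join A (join A x y) z = join A x (join A y z)) \<and>
     (\<forall>x y. meet A x (join A x y) = x) \<and> (\<forall>x y. join A x (meet A x y) = x) \<and>
     (\<forall>x. mult A (one A) x = x \<and> mult A x (one A) = x) \<and>
     (\<forall>x y z. (ale A (mult A x y) z \<longleftrightarrow> ale A y (ldiv A x z)) \<and>
              (ale A (mult A x y) z \<longleftrightarrow> ale A x (rdiv A z y))) \<and>
     ale A (one A) (bang A (one A)) \<and>
     (\<forall>x y. ale A (mult A (bang A x) (bang A y)) (bang A (mult A x y))) \<and>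
     (\<forall>x. ale A (bang A x) x) \<and>
     (\<forall>x. ale A (bang A x) (bang A (bang A x))) \<and>
     (\<forall>x y. ale A x y \<longrightarrow> ale A (bang A x) (bang A y))"

definition frhd :: "'t set \<Rightarrow> ('g \<Rightarrow> 't \<Rightarrow> bool) \<Rightarrow> 'g set \<Rightarrow> 't set" where
  "frhd T N X = {t \<in> T. \<forall>x\<in>X. N x t}"

definition flhd :: "'g set \<Rightarrow> ('g \<Rightarrow> 't \<Rightarrow> bool) \<Rightarrow> 't set \<Rightarrow> 'g set" where
  "flhd G N Y = {g \<in> G. \<forall>y\<in>Y. N g y}"

definition fgamma :: "'g set \<Rightarrow> 't set \<Rightarrow> ('g \<Rightarrow> 't \<Rightarrow> bool) \<Rightarrow> 'g set \<Rightarrow> 'g set" where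
  "fgamma G T N X = flhd G N (frhd T N X)"

definition Fplus_carrier :: "'g set \<Rightarrow> 't set \<Rightarrow> ('g \<Rightarrow> 't \<Rightarrow> bool) \<Rightarrow> 'g set set" where
  "Fplus_carrier G T N = {X. X \<subseteq> G \<and> fgamma G T N X = X}"

definition Fplus :: "'g set \<Rightarrow> ('g \<Rightarrow> 'g \<Rightarrow> 'g) \<Rightarrow> 'g \<Rightarrow> 't set \<Rightarrow> ('g \<Rightarrow> 't \<Rightarrow> bool)
    \<Rightarrow> 'g set \<Rightarrow> 'g set ialg" where
  "Fplus G m e T N K =
    \<lparr> meet = (\<lambda>X Y. X \<inter> Y),
      join = (\<lambda>X Y. fgamma G T N (X \<union> Y)),
      mult = (\<lambda>X Y. fgamma G T N {m x y | x y. x \<in> X \<and> y \<in> Y}),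
      ldiv = (\<lambda>X Y. {z \<in> G. \<forall>x\<in>X. m x z \<in> Y}),
      rdiv = (\<lambda>Y X. {z \<in> G. \<forall>x\<in>X. m z x \<in> Y}),
      one = fgamma G T N {e},
      bang = (\<lambda>X. fgamma G T N (X \<inter> K)) \<rparr>"

definition Fplus_zero :: "'g set \<Rightarrow> ('g \<Rightarrow> 't \<Rightarrow> bool) \<Rightarrow> 't \<Rightarrow> 'g set" where
  "Fplus_zero G N eps = flhd G N {eps}"

inductive_set gen_subgroupoid :: "('a \<Rightarrow> 'a \<Rightarrow> 'a) \<Rightarrow> 'a \<Rightarrow> 'a set \<Rightarrow> 'a set"
  for m :: "'a \<Rightarrow> 'a \<Rightarrow> 'a" and e :: 'a and S :: "'a set" where
  gen_base: "x \<in> S \<Longrightarrow> x \<in> gen_subgroupoid m e S"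
| gen_unit: "e \<in> gen_subgroupoid m e S"
| gen_mult: "x \<in> gen_subgroupoid m e S \<Longrightarrow> y \<in> gen_subgroupoid m e S \<Longrightarrow>
     m x y \<in> gen_subgroupoid m e S"

text \<open>Unary linear polynomials over G (represented by the maps they define).\<close>
inductive_set ulp :: "('a \<Rightarrow> 'a \<Rightarrow> 'a) \<Rightarrow> 'a set \<Rightarrow> ('a \<Rightarrow> 'a) set"
  for m :: "'a \<Rightarrow> 'a \<Rightarrow> 'a" and G :: "'a set" where
  ulp_id: "id \<in> ulp m G"
| ulp_left: "u \<in> ulp m G \<Longrightarrow> g \<in> G \<Longrightarrow> (\<lambda>x. m g (u x)) \<in> ulp m G"
| ulp_right: "u \<in> ulp m G \<Longrightarrow> g \<in> G \<Longrightarrow> (\<lambda>x. m (u x) g) \<in> ulp m G"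

definition GB :: "'a ialg \<Rightarrow> 'a set \<Rightarrow> 'a set" where
  "GB A B = gen_subgroupoid (mult A) (one A) B"

definition TB :: "'a ialg \<Rightarrow> 'a set \<Rightarrow> (('a \<Rightarrow> 'a) \<times> 'a) set" where
  "TB A B = ulp (mult A) (GB A B) \<times> B"

definition NB :: "'a ialg \<Rightarrow> 'a \<Rightarrow> ('a \<Rightarrow> 'a) \<times> 'a \<Rightarrow> bool" where
  "NB A x t = ale A (fst t x) (snd t)"

definition KB :: "'a ialg \<Rightarrow> 'a set \<Rightarrow> 'a set" where
  "KB A B = gen_subgroupoid (mult A) (one A) {bang A b | b. b \<in> B \<and> bang A b \<in> B}"

definition FplusAB :: "'a ialg \<Rightarrow> 'a set \<Rightarrow> 'a set ialg" where
  "FplusAB A B = Fplus (GB A B) (mult A) (one A) (TB A B) (NB A) (KB A B)"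

definition FplusAB_carrier :: "'a ialg \<Rightarrow> 'a set \<Rightarrow> 'a set set" where
  "FplusAB_carrier A B = Fplus_carrier (GB A B) (TB A B) (NB A)"

definition FplusAB_zero :: "'a ialg \<Rightarrow> 'a set \<Rightarrow> 'a \<Rightarrow> 'a set" where
  "FplusAB_zero A B z = Fplus_zero (GB A B) (NB A) (id, z)"

definition embmap :: "'a ialg \<Rightarrow> 'a set \<Rightarrow> 'a \<Rightarrow> 'a set" where
  "embmap A B b = flhd (GB A B) (NB A) {(id, b)}"

definition partial_embedding ::
  "'a ialg \<Rightarrow> 'a set \<Rightarrow> ('a \<Rightarrow> 'b) \<Rightarrow> 'b ialg \<Rightarrow> 'b set \<Rightarrow> bool" where
  "partial_embedding A B h D C \<longleftrightarrow>
     inj_on h B \<and> h ` B \<subseteq> C \<and>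
     (\<forall>x\<in>B. \<forall>y\<in>B. meet A x y \<in> B \<longrightarrow> h (meet A x y) = meet D (h x) (h y)) \<and>
     (\<forall>x\<in>B. \<forall>y\<in>B. join A x y \<in> B \<longrightarrow> h (join A x y) = join D (h x) (h y)) \<and>
     (\<forall>x\<in>B. \<forall>y\<in>B. mult A x y \<in> B \<longrightarrow> h (mult A x y) = mult D (h x) (h y)) \<and>
     (\<forall>x\<in>B. \<forall>y\<in>B. ldiv A x y \<in> B \<longrightarrow> h (ldiv A x y) = ldiv D (h x) (h y)) \<and>
     (\<forall>x\<in>B. \<forall>y\<in>B. rdiv A x y \<in> B \<longrightarrow> h (rdiv A x y) = rdiv D (h x) (h y)) \<and>
     (one A \<in> B \<longrightarrow> h (one A) = one D) \<and>
     (\<forall>x\<in>B. bang A x \<in> B \<longrightarrow> h (bang A x) = bang D (h x))"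

end

theory Submission
  imports Defs
begin

text \<open>The image of \<open>b\<close> is the principal down-set \<open>{g \<in> G\<^sub>B. g \<le> b}\<close>; it is Galois closed
  because \<open>(id, b)\<close> is one of the tests in \<open>T\<^sub>B\<close>. For each operation of \<open>F\<^sup>+\<close> defined as a
  closure \<open>\<gamma>(S)\<close>, the down-set of the value \<open>c \<in> B\<close> computed in \<open>A\<close> equals \<open>\<gamma>(S)\<close> as soon as
  \<open>c\<close> bounds \<open>S\<close> and every test \<open>(u, d)\<close> passed by all of \<open>S\<close> is passed by \<open>c\<close>. Since the linear
  polynomials \<open>u\<close> are monotone and, by residuation, preserve binary joins, this holds for
  joins, products, the unit and \<open>!\<close>; the latter uses that the generators of \<open>K\<^sub>B\<close> are open,
  \<open>k \<le> !k\<close>. The divisions are handled directly by residuation.\<close>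

context
  fixes A :: "'a ialg"
  assumes interior: "interior_rlu_groupoid A"
begin

lemma meet_commute: "meet A x y = meet A y x"
  and join_commute: "join A x y = join A y x"
  and meet_assoc: "meet A (meet A x y) z = meet A x (meet A y z)"
  and join_assoc: "join A (join A x y) z = join A x (join A y z)"
  and meet_join_absorb: "meet A x (join A x y) = x"
  and join_meet_absorb: "join A x (meet A x y) = x"
  and residuated_ldiv: "ale A (mult A x y) z \<longleftrightarrow> ale A y (ldiv A x z)"
  and residuated_rdiv: "ale A (mult A x y) z \<longleftrightarrow> ale A x (rdiv A z y)"
  and one_le_bang_one: "ale A (one A) (bang A (one A))"
  and bang_mult_le: "ale A (mult A (bang A x) (bang A y)) (bang A (mult A x y))"
  and bang_le: "ale A (bang A x) x"
  and bang_le_bang_bang: "ale A (bang A x) (bang A (bang A x))"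
  and bang_mono: "ale A x y \<Longrightarrow> ale A (bang A x) (bang A y)"
  using interior unfolding interior_rlu_groupoid_def by (blast | metis)+

lemma ale_refl: "ale A x x"
  unfolding ale_def by (metis meet_join_absorb join_meet_absorb)

lemma ale_antisym: "ale A x y \<Longrightarrow> ale A y x \<Longrightarrow> x = y"
  unfolding ale_def by (metis meet_commute)

lemma ale_trans: "ale A x y \<Longrightarrow> ale A y z \<Longrightarrow> ale A x z"
  unfolding ale_def by (metis meet_assoc)

lemma meet_greatest: "ale A g x \<Longrightarrow> ale A g y \<Longrightarrow> ale A g (meet A x y)"
  unfolding ale_def by (metis meet_assoc)

lemma meet_le1: "ale A (meet A x y) x"
  unfolding ale_def by (metis meet_commute meet_assoc ale_refl ale_def)

lemma meet_le2: "ale A (meet A x y) y"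
  using meet_le1 meet_commute by metis

lemma join_ge1: "ale A x (join A x y)"
  unfolding ale_def by (rule meet_join_absorb)

lemma join_ge2: "ale A y (join A x y)"
  using join_ge1 join_commute by metis

lemma join_least: "ale A x c \<Longrightarrow> ale A y c \<Longrightarrow> ale A (join A x y) c"
proof -
  have join_absorb: "join A x c = c" if "ale A x c" for x
    using that unfolding ale_def by (metis meet_commute join_commute join_meet_absorb)
  assume "ale A x c" "ale A y c"
  then have "join A (join A x y) c = c" by (metis join_absorb join_assoc)
  then show ?thesis unfolding ale_def by (metis meet_join_absorb)
qed

lemma mult_mono_left: "ale A a x \<Longrightarrow> ale A (mult A a y) (mult A x y)"
  by (metis residuated_rdiv ale_refl ale_trans)

lemma mult_mono_right: "ale A a y \<Longrightarrow> ale A (mult A x a) (mult A x y)"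
  by (metis residuated_ldiv ale_refl ale_trans)

lemma mult_mono: "ale A a x \<Longrightarrow> ale A b y \<Longrightarrow> ale A (mult A a b) (mult A x y)"
  by (metis mult_mono_left mult_mono_right ale_trans)

lemma ulp_mono: "u \<in> ulp (mult A) G \<Longrightarrow> ale A a b \<Longrightarrow> ale A (u a) (u b)"
  by (induction u rule: ulp.induct) (auto intro: mult_mono_left mult_mono_right)

lemma ulp_join_least:
  "u \<in> ulp (mult A) G \<Longrightarrow> ale A (u a) d \<Longrightarrow> ale A (u b) d \<Longrightarrow> ale A (u (join A a b)) d"
proof (induction u arbitrary: d rule: ulp.induct)
  case ulp_id
  then show ?case by (simp add: join_least)
next
  case (ulp_left u g)
  then show ?case by (metis residuated_ldiv)
next
  case (ulp_right u g)
  then show ?case by (metis residuated_rdiv)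
qed

lemma KB_le_bang: "k \<in> KB A B \<Longrightarrow> ale A k (bang A k)"
  unfolding KB_def
proof (induction k rule: gen_subgroupoid.induct)
  case (gen_base x)
  then show ?case using bang_le_bang_bang by auto
next
  case gen_unit
  then show ?case using one_le_bang_one by simp
next
  case (gen_mult x y)
  then show ?case using mult_mono bang_mult_le ale_trans by metis
qed

lemma mem_GB: "b \<in> B \<Longrightarrow> b \<in> GB A B"
  unfolding GB_def by (rule gen_base)

lemma mem_embmap: "x \<in> embmap A B c \<longleftrightarrow> x \<in> GB A B \<and> ale A x c"
  unfolding embmap_def flhd_def NB_def by simp

lemma self_mem_embmap: "c \<in> B \<Longrightarrow> c \<in> embmap A B c"
  by (simp add: mem_embmap mem_GB ale_refl)

lemma embmap_eq_fgamma:
  assumes c: "c \<in> B" and upper: "\<forall>s\<in>S. ale A s c"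
    and least: "\<And>u d. u \<in> ulp (mult A) (GB A B) \<Longrightarrow> \<forall>s\<in>S. ale A (u s) d \<Longrightarrow> ale A (u c) d"
  shows "embmap A B c = fgamma (GB A B) (TB A B) (NB A) S"
proof (rule set_eqI, rule iffI)
  fix g
  assume "g \<in> embmap A B c"
  then have g: "g \<in> GB A B" "ale A g c" by (simp_all add: mem_embmap)
  have "ale A (u g) d" if "(u, d) \<in> frhd (TB A B) (NB A) S" for u d
  proof -
    from that have "u \<in> ulp (mult A) (GB A B)" "\<forall>s\<in>S. ale A (u s) d"
      unfolding frhd_def TB_def NB_def by auto
    then show ?thesis using least ulp_mono g(2) ale_trans by blast
  qed
  then show "g \<in> fgamma (GB A B) (TB A B) (NB A) S"
    using g(1) unfolding fgamma_def flhd_def NB_def by auto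
next
  fix g
  assume g: "g \<in> fgamma (GB A B) (TB A B) (NB A) S"
  have "(id, c) \<in> frhd (TB A B) (NB A) S"
    unfolding frhd_def TB_def NB_def using c upper ulp_id by auto
  then show "g \<in> embmap A B c"
    using g unfolding fgamma_def embmap_def flhd_def NB_def by auto
qed

lemma inj_on_embmap: "inj_on (embmap A B) B"
proof (rule inj_onI)
  fix x y
  assume "x \<in> B" "y \<in> B" "embmap A B x = embmap A B y"
  then have "x \<in> embmap A B y" "y \<in> embmap A B x"
    using self_mem_embmap by auto
  then show "x = y" using mem_embmap ale_antisym by blast
qed

lemma embmap_in_carrier:
  assumes "c \<in> B"
  shows "embmap A B c \<in> FplusAB_carrier A B"
proof -
  have "embmap A B c = fgamma (GB A B) (TB A B) (NB A) (embmap A B c)"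
    by (rule embmap_eq_fgamma[OF assms]) (use self_mem_embmap[OF assms] in \<open>auto simp: mem_embmap\<close>)
  then show ?thesis
    unfolding FplusAB_carrier_def Fplus_carrier_def by (auto simp: mem_embmap)
qed

lemma embmap_meet:
  "embmap A B (meet A x y) = meet (FplusAB A B) (embmap A B x) (embmap A B y)"
  unfolding FplusAB_def Fplus_def
  by (auto simp: mem_embmap intro: meet_greatest ale_trans[OF _ meet_le1] ale_trans[OF _ meet_le2])

lemma embmap_join:
  assumes "x \<in> B" "y \<in> B" "join A x y \<in> B"
  shows "embmap A B (join A x y) = join (FplusAB A B) (embmap A B x) (embmap A B y)"
  unfolding FplusAB_def Fplus_def ialg.simps
proof (rule embmap_eq_fgamma[OF assms(3)])
  show "\<forall>s\<in>embmap A B x \<union> embmap A B y. ale A s (join A x y)"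
    by (auto simp: mem_embmap intro: ale_trans join_ge1 join_ge2)
next
  fix u d
  assume "u \<in> ulp (mult A) (GB A B)" "\<forall>s\<in>embmap A B x \<union> embmap A B y. ale A (u s) d"
  with assms show "ale A (u (join A x y)) d"
    using ulp_join_least self_mem_embmap by blast
qed

lemma embmap_mult:
  assumes "x \<in> B" "y \<in> B" "mult A x y \<in> B"
  shows "embmap A B (mult A x y) = mult (FplusAB A B) (embmap A B x) (embmap A B y)"
  unfolding FplusAB_def Fplus_def ialg.simps
proof (rule embmap_eq_fgamma[OF assms(3)])
  show "\<forall>s\<in>{mult A a b |a b. a \<in> embmap A B x \<and> b \<in> embmap A B y}. ale A s (mult A x y)"
    by (auto simp: mem_embmap intro: mult_mono)
next
  fix u d
  assume "\<forall>s\<in>{mult A a b |a b. a \<in> embmap A B x \<and> b \<in> embmap A B y}. ale A (u s) d"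
  with assms show "ale A (u (mult A x y)) d"
    using self_mem_embmap by blast
qed

lemma embmap_ldiv:
  assumes "x \<in> B"
  shows "embmap A B (ldiv A x y) = ldiv (FplusAB A B) (embmap A B x) (embmap A B y)"
  unfolding FplusAB_def Fplus_def ialg.simps
proof (rule set_eqI, rule iffI)
  fix g
  assume "g \<in> embmap A B (ldiv A x y)"
  then have g: "g \<in> GB A B" "ale A (mult A x g) y" by (auto simp: mem_embmap residuated_ldiv)
  then have "\<forall>a\<in>embmap A B x. mult A a g \<in> embmap A B y"
    by (auto simp: mem_embmap GB_def intro: gen_mult ale_trans[OF mult_mono_left])
  with g show "g \<in> {z \<in> GB A B. \<forall>a\<in>embmap A B x. mult A a z \<in> embmap A B y}" by auto
next
  fix g
  assume "g \<in> {z \<in> GB A B. \<forall>a\<in>embmap A B x. mult A a z \<in> embmap A B y}"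
  then show "g \<in> embmap A B (ldiv A x y)"
    using self_mem_embmap[OF assms] by (auto simp: mem_embmap residuated_ldiv)
qed

lemma embmap_rdiv:
  assumes "y \<in> B"
  shows "embmap A B (rdiv A x y) = rdiv (FplusAB A B) (embmap A B x) (embmap A B y)"
  unfolding FplusAB_def Fplus_def ialg.simps
proof (rule set_eqI, rule iffI)
  fix g
  assume "g \<in> embmap A B (rdiv A x y)"
  then have g: "g \<in> GB A B" "ale A (mult A g y) x" by (auto simp: mem_embmap residuated_rdiv)
  then have "\<forall>a\<in>embmap A B y. mult A g a \<in> embmap A B x"
    by (auto simp: mem_embmap GB_def intro: gen_mult ale_trans[OF mult_mono_right])
  with g show "g \<in> {z \<in> GB A B. \<forall>a\<in>embmap A B y. mult A z a \<in> embmap A B x}" by auto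
next
  fix g
  assume "g \<in> {z \<in> GB A B. \<forall>a\<in>embmap A B y. mult A z a \<in> embmap A B x}"
  then show "g \<in> embmap A B (rdiv A x y)"
    using self_mem_embmap[OF assms] by (auto simp: mem_embmap residuated_rdiv)
qed

lemma embmap_one: "one A \<in> B \<Longrightarrow> embmap A B (one A) = one (FplusAB A B)"
  unfolding FplusAB_def Fplus_def ialg.simps
  by (rule embmap_eq_fgamma) (auto simp: ale_refl)

lemma embmap_bang:
  assumes "x \<in> B" "bang A x \<in> B"
  shows "embmap A B (bang A x) = bang (FplusAB A B) (embmap A B x)"
  unfolding FplusAB_def Fplus_def ialg.simps
proof (rule embmap_eq_fgamma[OF assms(2)])
  show "\<forall>s\<in>embmap A B x \<inter> KB A B. ale A s (bang A x)"
    by (auto simp: mem_embmap intro: ale_trans[OF KB_le_bang bang_mono])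
next
  have "bang A x \<in> KB A B" unfolding KB_def using assms by (auto intro: gen_base)
  moreover have "bang A x \<in> embmap A B x" using assms mem_GB bang_le mem_embmap by auto
  moreover fix u d
  assume "\<forall>s\<in>embmap A B x \<inter> KB A B. ale A (u s) d"
  ultimately show "ale A (u (bang A x)) d" by blast
qed

lemma partial_embedding_embmap:
  "partial_embedding A B (embmap A B) (FplusAB A B) (FplusAB_carrier A B)"
  unfolding partial_embedding_def
  by (intro conjI ballI impI image_subsetI inj_on_embmap embmap_in_carrier embmap_meet
      embmap_join embmap_mult embmap_ldiv embmap_rdiv embmap_one embmap_bang)

end

theorem mainTheorem8:
  fixes A :: "'a ialg" and B :: "'a set" and z :: 'a
  assumes "interior_rlu_groupoid A"
  shows "partial_embedding A B (embmap A B) (FplusAB A B) (FplusAB_carrier A B)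
       \<and> (z \<in> B \<longrightarrow>
            partial_embedding A B (embmap A B) (FplusAB A B) (FplusAB_carrier A B)
            \<and> embmap A B z = FplusAB_zero A B z)"
proof -
  have "embmap A B z = FplusAB_zero A B z"
    by (simp add: embmap_def FplusAB_zero_def Fplus_zero_def)
  then show ?thesis using partial_embedding_embmap[OF assms] by simp
qed

end
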